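(* Let $\mathcal{X}=\mathcal{X}^{(1)}\times\cdots\times\mathcal{X}^{(d)}$ with each $\mathcal{X}^{(l)}$ finite, fix $i\in\{1,\dots,d\}$, let $\pi=\otimes_{l=1}^d\pi^{(l)}$ be a positive product distribution, let $P\in\mathcal{L}(\mathcal{X})$ be $\pi$-stationary and, for $j\ne i$, let $L_j\in\mathcal{L}(\mathcal{X}^{(j)})$ be $\pi^{(j)}$-stationary. Let $K_i:=\{(\otimes_{j<i}L_j)\otimes M\otimes(\otimes_{j>i}L_j):\ M\in\mathcal{L}(\mathcal{X}^{(i)})\ \pi^{(i)}\text{-stationary}\}$, each element identified with its edge measure $(\pi\boxtimes Q)(x,y)=\pi(x)Q(x,y)$. Let $f(t)=-\ln t$. Let $(X_n)_{n\ge1}$ be a Markov chain with transition matrix $P$ and arbitrary initial distribution, and $E_n:=\frac1n\big(\sum_{k=1}^{n-1}\delta_{(X_k,X_{k+1})}+\delta_{(X_n,X_1)}\big)$. Then $\limsup_{n\to\infty}\frac1n\ln\mathbb{P}(E_n\in K_i)\le-D_f^\pi\big(P\,\|\,(\otimes_{j<i}L_j)\otimes L^{(i)}_*\otimes(\otimes_{j>i}L_j)\big)$, where $L_*^{(i)}(x^i,y^i)\propto\prod_{x^{(-i)},y^{(-i)}}P(x,y)^{\pi(x)\mathbf{Z}(x^{(-i)},y^{(-i)})/Z(x^i,y^i)}$ (normalized over $y^i$), with $\mathbf{Z}(x^{(-i)},y^{(-i)})=\prod_{j\ne i}L_j(x^j,y^j)$ and $Z(x^i,y^i)=\sum_{x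^{(-i)},y^{(-i)}}\pi(x)\mathbf{Z}(x^{(-i)},y^{(-i)})$.
   Context: $\mathcal{L}(\Omega)$: transition matrices on finite $\Omega$. $D_f^{\pi}(M\|L):=\sum_{x}\pi(x)\sum_y L(x,y)f\big(M(x,y)/L(x,y)\big)$ with conventions $0f(0/0)=0$, $0f(a/0)=a\lim_{t\to0^+}tf(1/t)$; for $f=-\ln$ this is the reverse KL divergence $\sum_{x,y}\pi(x)L(x,y)\ln\frac{L(x,y)}{M(x,y)}$. $(\otimes_jL_j)(x,y)=\prod_jL_j(x^j,y^j)$; $x^{(-i)}=(x^j)_{j\ne i}$. $P$ is $\pi$-stationary if $\pi P=\pi$. $L^{(i)}_*$ is the unique minimizer over $L\in\mathcal{L}(\mathcal{X}^{(i)})$ of $D_f^\pi(P\|(\otimes_{j<i}L_j)\otimes L\otimes(\otimes_{j>i}L_j))$. *)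

theory Defs
  imports "HOL-Analysis.Analysis"
begin

text \<open>Finite product state space X = X^(0) x ... x X^(d-1) (coordinates indexed by 0..<d),
  states are extensional functions in PiE.\<close>

definition prod_space :: "nat \<Rightarrow> (nat \<Rightarrow> 'a set) \<Rightarrow> (nat \<Rightarrow> 'a) set" where
  "prod_space d S = PiE {..<d} S"

definition is_trans :: "'s set \<Rightarrow> ('s \<Rightarrow> 's \<Rightarrow> real) \<Rightarrow> bool" where
  "is_trans A Q \<longleftrightarrow> (\<forall>x\<in>A. \<forall>y\<in>A. 0 \<le> Q x y) \<and> (\<forall>x\<in>A. (\<Sum>y\<in>A. Q x y) = 1)"

definition is_stationary :: "'s set \<Rightarrow> ('s \<Rightarrow> real) \<Rightarrow> ('s \<Rightarrow> 's \<Rightarrow> real) \<Rightarrow> bool" where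
  "is_stationary A p Q \<longleftrightarrow> (\<forall>y\<in>A. (\<Sum>x\<in>A. p x * Q x y) = p y)"

definition is_distr :: "'s set \<Rightarrow> ('s \<Rightarrow> real) \<Rightarrow> bool" where
  "is_distr A p \<longleftrightarrow> (\<forall>x\<in>A. 0 \<le> p x) \<and> (\<Sum>x\<in>A. p x) = 1"

definition tensor :: "nat \<Rightarrow> (nat \<Rightarrow> 'a \<Rightarrow> 'a \<Rightarrow> real) \<Rightarrow> (nat \<Rightarrow> 'a) \<Rightarrow> (nat \<Rightarrow> 'a) \<Rightarrow> real" where
  "tensor d Ls x y = (\<Prod>j<d. Ls j (x j) (y j))"

definition prod_distr :: "nat \<Rightarrow> (nat \<Rightarrow> 'a \<Rightarrow> real) \<Rightarrow> (nat \<Rightarrow> 'a) \<Rightarrow> real" where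
  "prod_distr d pis x = (\<Prod>l<d. pis l (x l))"

text \<open>D_f^pi(M || L) for f = -ln, i.e. the reverse KL divergence
  sum_{x,y} pi(x) L(x,y) ln(L(x,y)/M(x,y)), with the conventions 0 f(0/0) = 0 and
  0 f(a/0) = a lim_{t->0+} t f(1/t) = 0 (terms with L(x,y) = 0 vanish); a term with
  L(x,y) > 0 = M(x,y) is +infinity (since f(0) = -ln 0 = +infinity).\<close>
definition rev_kl :: "'s set \<Rightarrow> ('s \<Rightarrow> real) \<Rightarrow> ('s \<Rightarrow> 's \<Rightarrow> real) \<Rightarrow> ('s \<Rightarrow> 's \<Rightarrow> real) \<Rightarrow> ereal" where
  "rev_kl A p M L = (\<Sum>x\<in>A. \<Sum>y\<in>A.
      (if p x * L x y = 0 then 0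
       else if M x y = 0 then \<infinity>
       else ereal (p x * L x y * ln (L x y / M x y))))"

definition eln :: "real \<Rightarrow> ereal" where
  "eln t = (if t \<le> 0 then -\<infinity> else ereal (ln t))"

definition emp_edge :: "nat \<Rightarrow> (nat \<Rightarrow> 's) \<Rightarrow> 's \<Rightarrow> 's \<Rightarrow> real" where
  "emp_edge n xs a b =
     (real (card {k\<in>{1..<n}. xs k = a \<and> xs (Suc k) = b})
      + (if xs n = a \<and> xs 1 = b then 1 else 0)) / real n"

definition mc_prob :: "'s set \<Rightarrow> ('s \<Rightarrow> real) \<Rightarrow> ('s \<Rightarrow> 's \<Rightarrow> real) \<Rightarrow> nat \<Rightarrow> ((nat \<Rightarrow> 's) \<Rightarrow> bool) \<Rightarrow> real" where
  "mc_prob A mu P n E =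
     (\<Sum>xs\<in>{xs \<in> PiE {1..n} (\<lambda>_. A). E xs}. mu (xs 1) * (\<Prod>k\<in>{1..<n}. P (xs k) (xs (Suc k))))"

definition in_K :: "nat \<Rightarrow> (nat \<Rightarrow> 'a set) \<Rightarrow> (nat \<Rightarrow> 'a \<Rightarrow> real) \<Rightarrow> (nat \<Rightarrow> 'a \<Rightarrow> 'a \<Rightarrow> real)
     \<Rightarrow> nat \<Rightarrow> ((nat \<Rightarrow> 'a) \<Rightarrow> (nat \<Rightarrow> 'a) \<Rightarrow> real) \<Rightarrow> bool" where
  "in_K d S pis Ls i Em \<longleftrightarrow>
     (\<exists>M. is_trans (S i) M \<and> is_stationary (S i) (pis i) M \<and>
        (\<forall>x\<in>prod_space d S. \<forall>y\<in>prod_space d S.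
            Em x y = prod_distr d pis x * tensor d (Ls(i := M)) x y))"

end

theory Submission
  imports Defs "HOL-Real_Asymp.Real_Asymp"
begin

text \<open>Method of types. Let N count the transitions of a path x_1 ... x_n. If its cyclic edge
  measure (N + delta_(x_n, x_1)) / n equals pi (x) T for T = (tensor_(j<i) L_j) (x) M (x)
  (tensor_(j>i) L_j), then the P-weight of the path is its T-weight times exp (sum N ln (P / T)),
  and this exponent is -n D(P || T) + O(1), the error coming from the closing edge. If
  P(x_n, x_1) = 0 the divergence is infinite; but then the entry of M on the closing edge is
  O(1/n), and deleting it and renormalising its row yields an L with exponent at most
  -n D(P || T_L) + O(log n). By minimality of L_* each path of the event thus has P-weight at most
  exp (-n D(P || T_(L_*)) + O(log n)) times its T-weight, paths with a common edge measure have
  total T-weight at most 1, and there are at most (n + 1)^(|X|^2) edge measures.\<close>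

section \<open>Transition matrices\<close>

lemma is_trans_nonneg: "is_trans A Q \<Longrightarrow> x \<in> A \<Longrightarrow> y \<in> A \<Longrightarrow> 0 \<le> Q x y"
  by (simp add: is_trans_def)

lemma is_trans_le_1:
  assumes "finite A" "is_trans A Q" "x \<in> A" "y \<in> A"
  shows "Q x y \<le> 1"
proof -
  have "Q x y \<le> (\<Sum>z\<in>A. Q x z)"
    using assms by (intro member_le_sum) (auto simp: is_trans_def)
  also have "\<dots> = 1" using assms by (simp add: is_trans_def)
  finally show ?thesis .
qed

lemma is_trans_cong:
  assumes "is_trans A Q" "\<And>x y. x \<in> A \<Longrightarrow> y \<in> A \<Longrightarrow> Q' x y = Q x y"
  shows "is_trans A Q'"
  using assms by (simp add: is_trans_def)

lemma is_trans_tensor: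
  assumes fin: "\<forall>l<d. finite (S l)" and trans: "\<forall>j<d. is_trans (S j) (Ls j)"
  shows "is_trans (prod_space d S) (tensor d Ls)"
  unfolding is_trans_def
proof safe
  fix x y assume "x \<in> prod_space d S" "y \<in> prod_space d S"
  then show "0 \<le> tensor d Ls x y"
    using trans unfolding tensor_def
    by (intro prod_nonneg) (auto simp: prod_space_def is_trans_def PiE_iff)
next
  fix x assume x: "x \<in> prod_space d S"
  have "(\<Sum>y\<in>prod_space d S. tensor d Ls x y) = (\<Prod>j<d. \<Sum>b\<in>S j. Ls j (x j) b)"
    unfolding tensor_def prod_space_def using fin by (intro prod_sum_PiE[symmetric]) auto
  also have "\<dots> = 1"
    using x trans by (intro prod.neutral) (auto simp: prod_space_def is_trans_def PiE_iff)
  finally show "(\<Sum>y\<in>prod_space d S. tensor d Ls x y) = 1" .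
qed

definition tensor_except :: "nat \<Rightarrow> nat \<Rightarrow> (nat \<Rightarrow> 'a \<Rightarrow> 'a \<Rightarrow> real) \<Rightarrow> (nat \<Rightarrow> 'a) \<Rightarrow> (nat \<Rightarrow> 'a) \<Rightarrow> real"
  where "tensor_except d i Ls x y = (\<Prod>j\<in>{..<d} - {i}. Ls j (x j) (y j))"

lemma tensor_fun_upd:
  assumes "i < d"
  shows "tensor d (Ls(i := L)) x y = L (x i) (y i) * tensor_except d i Ls x y"
  using assms unfolding tensor_def tensor_except_def
  by (auto simp: prod.remove[of "{..<d}" i] intro!: arg_cong2[where f = "(*)"] prod.cong)

definition remove_entry :: "('s \<Rightarrow> 's \<Rightarrow> real) \<Rightarrow> 's \<Rightarrow> 's \<Rightarrow> 's \<Rightarrow> 's \<Rightarrow> real" where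
  "remove_entry M a b u v =
     (if u \<noteq> a then M u v else if v = b then 0 else M a v / (1 - M a b))"

lemma is_trans_remove_entry:
  assumes "finite A" "is_trans A M" "a \<in> A" "b \<in> A" "M a b < 1"
  shows "is_trans A (remove_entry M a b)"
  unfolding is_trans_def
proof safe
  fix u v assume "u \<in> A" "v \<in> A"
  then show "0 \<le> remove_entry M a b u v"
    using assms by (auto simp: remove_entry_def is_trans_def)
next
  fix u assume u: "u \<in> A"
  show "(\<Sum>v\<in>A. remove_entry M a b u v) = 1"
  proof (cases "u = a")
    case True
    have "(\<Sum>v\<in>A. remove_entry M a b u v) = (\<Sum>v\<in>A - {b}. M a v / (1 - M a b))"
      using assms True by (auto simp: sum.remove[of A b] remove_entry_def intro!: sum.cong)
    also have "\<dots> = (\<Sum>v\<in>A - {b}. M a v) / (1 - M a b)"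
      by (simp add: sum_divide_distrib)
    also have "(\<Sum>v\<in>A - {b}. M a v) = 1 - M a b"
      using assms by (simp add: sum_diff1 is_trans_def)
    finally show ?thesis using assms by simp
  next
    case False
    then show ?thesis using assms u by (simp add: remove_entry_def is_trans_def)
  qed
qed

section \<open>Paths and pair counts\<close>

lemma sum_paths_prod_trans:
  assumes "is_trans A Q"
  shows "(\<Sum>xs\<in>PiE {1..Suc n} (\<lambda>_. A). f (xs 1) * (\<Prod>k\<in>{1..<Suc n}. Q (xs k) (xs (Suc k))))
       = (\<Sum>a\<in>A. f a)"
proof (induction n)
  case 0
  have one: "{1..Suc 0} = insert 1 {}" by auto
  have "(\<Sum>xs\<in>PiE {1..Suc 0} (\<lambda>_. A). f (xs 1))
      = (\<Sum>(a, g)\<in>A \<times> PiE ({}::nat set) (\<lambda>_. A). f ((g(1 := a)) 1))"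
    unfolding one PiE_insert_eq by (subst sum.reindex[OF inj_combinator]) (auto simp: split_beta)
  also have "\<dots> = (\<Sum>a\<in>A. f a)"
    by (simp add: sum.cartesian_product[symmetric])
  finally show ?case by simp
next
  case (Suc n)
  define m where "m = Suc (Suc n)"
  define w where "w xs = f (xs 1) * (\<Prod>k\<in>{1..<Suc n}. Q (xs k) (xs (Suc k)))" for xs :: "nat \<Rightarrow> _"
  have m: "{1..m} = insert m {1..Suc n}" "m \<notin> {1..Suc n}" by (auto simp: m_def)
  have step: "f ((g(m := a)) 1) * (\<Prod>k\<in>{1..<m}. Q ((g(m := a)) k) ((g(m := a)) (Suc k)))
      = w g * Q (g (Suc n)) a" for g a
  proof -
    have "(\<Prod>k\<in>{1..<Suc n}. Q ((g(m := a)) k) ((g(m := a)) (Suc k)))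
        = (\<Prod>k\<in>{1..<Suc n}. Q (g k) (g (Suc k)))"
      by (intro prod.cong) (auto simp: m_def)
    moreover have "{1..<m} = insert (Suc n) {1..<Suc n}" by (auto simp: m_def)
    ultimately show ?thesis by (simp add: w_def m_def)
  qed
  have "(\<Sum>xs\<in>PiE {1..m} (\<lambda>_. A). f (xs 1) * (\<Prod>k\<in>{1..<m}. Q (xs k) (xs (Suc k))))
      = (\<Sum>(a, g)\<in>A \<times> PiE {1..Suc n} (\<lambda>_. A).
           f ((g(m := a)) 1) * (\<Prod>k\<in>{1..<m}. Q ((g(m := a)) k) ((g(m := a)) (Suc k))))"
    unfolding m PiE_insert_eq by (subst sum.reindex[OF inj_combinator[OF m(2)]]) (simp add: split_beta)
  also have "\<dots> = (\<Sum>(a, g)\<in>A \<times> PiE {1..Suc n} (\<lambda>_. A). w g * Q (g (Suc n)) a)"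
    by (intro sum.cong refl) (simp only: split_beta step)
  also have "\<dots> = (\<Sum>g\<in>PiE {1..Suc n} (\<lambda>_. A). w g * (\<Sum>a\<in>A. Q (g (Suc n)) a))"
    by (simp add: sum.swap[of _ A] sum.cartesian_product[symmetric] sum_distrib_left)
  also have "\<dots> = (\<Sum>g\<in>PiE {1..Suc n} (\<lambda>_. A). w g)"
    using assms by (intro sum.cong) (auto simp: is_trans_def)
  finally show ?case using Suc by (simp add: w_def m_def)
qed

lemma sum_paths_prod_trans_le_1:
  assumes "finite A" "is_trans A Q" "is_distr A \<mu>" "1 \<le> n" "F \<subseteq> PiE {1..n} (\<lambda>_. A)"
  shows "(\<Sum>xs\<in>F. \<mu> (xs 1) * (\<Prod>k\<in>{1..<n}. Q (xs k) (xs (Suc k)))) \<le> 1"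
proof -
  obtain n' where n': "n = Suc n'" using assms(4) by (cases n) auto
  have "(\<Sum>xs\<in>F. \<mu> (xs 1) * (\<Prod>k\<in>{1..<n}. Q (xs k) (xs (Suc k))))
      \<le> (\<Sum>xs\<in>PiE {1..n} (\<lambda>_. A). \<mu> (xs 1) * (\<Prod>k\<in>{1..<n}. Q (xs k) (xs (Suc k))))"
    using assms
    by (intro sum_mono2 finite_PiE mult_nonneg_nonneg prod_nonneg)
       (auto simp: is_distr_def is_trans_def PiE_iff)
  also have "\<dots> = 1"
    unfolding n' by (subst sum_paths_prod_trans) (use assms in \<open>auto simp: is_distr_def\<close>)
  finally show ?thesis .
qed

definition pair_count :: "nat \<Rightarrow> (nat \<Rightarrow> 's) \<Rightarrow> 's \<Rightarrow> 's \<Rightarrow> nat" where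
  "pair_count n xs a b = card {k\<in>{1..<n}. xs k = a \<and> xs (Suc k) = b}"

lemma emp_edge_eq_pair_count:
  "emp_edge n xs a b = (real (pair_count n xs a b) + (if xs n = a \<and> xs 1 = b then 1 else 0)) / real n"
  by (simp add: emp_edge_def pair_count_def)

lemma pair_count_pos_iff:
  "0 < pair_count n xs a b \<longleftrightarrow> (\<exists>k\<in>{1..<n}. xs k = a \<and> xs (Suc k) = b)"
  by (auto simp: pair_count_def card_gt_0_iff)

lemma pair_count_le: "pair_count n xs a b \<le> n - 1"
proof -
  have "pair_count n xs a b \<le> card {1..<n}" unfolding pair_count_def by (rule card_mono) auto
  then show ?thesis by simp
qed

lemma sum_steps_eq_sum_pair_count:
  assumes "finite A" "\<forall>k\<in>{1..n}. xs k \<in> A"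
  shows "(\<Sum>k\<in>{1..<n}. f (xs k) (xs (Suc k))) = (\<Sum>a\<in>A. \<Sum>b\<in>A. real (pair_count n xs a b) * f a b)"
proof -
  have "(\<Sum>k\<in>{1..<n}. f (xs k) (xs (Suc k)))
      = (\<Sum>p\<in>A \<times> A. \<Sum>k\<in>{k\<in>{1..<n}. (xs k, xs (Suc k)) = p}. f (xs k) (xs (Suc k)))"
    using assms by (intro sum.group[symmetric]) auto
  also have "\<dots> = (\<Sum>p\<in>A \<times> A. real (pair_count n xs (fst p) (snd p)) * f (fst p) (snd p))"
  proof (intro sum.cong refl)
    fix p :: "'a \<times> 'a"
    have "(\<Sum>k\<in>{k\<in>{1..<n}. (xs k, xs (Suc k)) = p}. f (xs k) (xs (Suc k)))
        = (\<Sum>k\<in>{k\<in>{1..<n}. xs k = fst p \<and> xs (Suc k) = snd p}. f (fst p) (snd p))"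
      by (intro sum.cong) auto
    then show "(\<Sum>k\<in>{k\<in>{1..<n}. (xs k, xs (Suc k)) = p}. f (xs k) (xs (Suc k)))
        = real (pair_count n xs (fst p) (snd p)) * f (fst p) (snd p)"
      by (simp add: pair_count_def)
  qed
  finally show ?thesis by (simp add: sum.cartesian_product split_beta)
qed

lemma emp_edge_in_grid:
  assumes "1 \<le> n"
  shows "emp_edge n xs a b \<in> (\<lambda>k. real k / real n) ` {0..n}"
proof -
  define k where "k = pair_count n xs a b + (if xs n = a \<and> xs 1 = b then 1 else 0)"
  have "k \<le> n"
    unfolding k_def by (cases "xs n = a \<and> xs 1 = b") (use pair_count_le[of n xs a b] assms in auto)
  moreover have "emp_edge n xs a b = real k / real n" by (simp add: emp_edge_eq_pair_count k_def)
  ultimately show ?thesis by auto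
qed

lemma card_PiE_grid_le:
  assumes "finite D"
  shows "card (PiE D (\<lambda>_. (\<lambda>k. real k / real n) ` {0..n})) \<le> (n + 1) ^ card D"
proof -
  have "card ((\<lambda>k. real k / real n) ` {0..n}) \<le> n + 1"
    using card_image_le[of "{0..n}"] by simp
  then show ?thesis using assms by (simp add: card_PiE power_mono)
qed

section \<open>Divergence and exponential estimates\<close>

lemma finite_positive_lower_bound:
  fixes f :: "'a \<Rightarrow> real"
  assumes "finite A"
  obtains c where "0 < c" "c \<le> 1" "\<And>a. a \<in> A \<Longrightarrow> 0 < f a \<Longrightarrow> c \<le> f a"
proof
  let ?c = "Min (insert 1 (f ` {a\<in>A. 0 < f a}))"
  show "0 < ?c" "?c \<le> 1" using assms by auto
  show "?c \<le> f a" if "a \<in> A" "0 < f a" for a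
    using assms that by (intro Min_le) auto
qed

lemma rev_kl_eq_ereal:
  assumes "\<forall>x\<in>A. \<forall>y\<in>A. p x * L x y \<noteq> 0 \<longrightarrow> M x y \<noteq> 0"
  shows "rev_kl A p M L = ereal (\<Sum>x\<in>A. \<Sum>y\<in>A. p x * L x y * ln (L x y / M x y))"
  unfolding rev_kl_def sum_ereal[symmetric] using assms by (intro sum.cong refl) auto

lemma sum_le_rev_kl:
  fixes f :: "'a \<Rightarrow> 'a \<Rightarrow> real" and e n :: real
  assumes "finite A"
    and "\<And>x y. x \<in> A \<Longrightarrow> y \<in> A \<Longrightarrow> p x * L x y \<noteq> 0 \<Longrightarrow> M x y \<noteq> 0"
    and "\<And>x y. x \<in> A \<Longrightarrow> y \<in> A \<Longrightarrow> f x y \<le> e - n * (p x * L x y * ln (L x y / M x y))"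
  shows "\<exists>\<rho>. rev_kl A p M L = ereal \<rho> \<and> (\<Sum>x\<in>A. \<Sum>y\<in>A. f x y) \<le> card (A \<times> A) * e - n * \<rho>"
proof -
  define \<rho> where "\<rho> = (\<Sum>x\<in>A. \<Sum>y\<in>A. p x * L x y * ln (L x y / M x y))"
  have "rev_kl A p M L = ereal \<rho>"
    unfolding \<rho>_def using assms(2) by (intro rev_kl_eq_ereal) auto
  moreover have "(\<Sum>x\<in>A. \<Sum>y\<in>A. f x y) \<le> (\<Sum>x\<in>A. \<Sum>y\<in>A. e - n * (p x * L x y * ln (L x y / M x y)))"
    using assms(3) by (intro sum_mono) auto
  moreover have "\<dots> = card (A \<times> A) * e - n * \<rho>"
    using assms(1) by (simp add: \<rho>_def sum_subtractf sum_distrib_left card_cartesian_product)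
  ultimately show ?thesis by auto
qed

lemma prod_steps_eq_exp_sum_pair_count:
  assumes "finite A" "\<forall>k\<in>{1..n}. xs k \<in> A"
    and "\<forall>k\<in>{1..<n}. 0 < P (xs k) (xs (Suc k)) \<and> 0 < T (xs k) (xs (Suc k))"
  shows "(\<Prod>k\<in>{1..<n}. P (xs k) (xs (Suc k)))
       = exp (\<Sum>a\<in>A. \<Sum>b\<in>A. real (pair_count n xs a b) * (ln (P a b) - ln (T a b)))
         * (\<Prod>k\<in>{1..<n}. T (xs k) (xs (Suc k)))"
proof -
  have "(\<Prod>k\<in>{1..<n}. P (xs k) (xs (Suc k)))
      = (\<Prod>k\<in>{1..<n}. exp (ln (P (xs k) (xs (Suc k))) - ln (T (xs k) (xs (Suc k)))) * T (xs k) (xs (Suc k)))"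
  proof (intro prod.cong refl)
    fix k assume "k \<in> {1..<n}"
    then have "0 < P (xs k) (xs (Suc k))" "0 < T (xs k) (xs (Suc k))" using assms(3) by auto
    then show "P (xs k) (xs (Suc k))
        = exp (ln (P (xs k) (xs (Suc k))) - ln (T (xs k) (xs (Suc k)))) * T (xs k) (xs (Suc k))"
      by (simp add: exp_diff)
  qed
  also have "\<dots> = exp (\<Sum>k\<in>{1..<n}. ln (P (xs k) (xs (Suc k))) - ln (T (xs k) (xs (Suc k))))
                   * (\<Prod>k\<in>{1..<n}. T (xs k) (xs (Suc k)))"
    by (simp add: prod.distrib exp_sum)
  finally show ?thesis
    using sum_steps_eq_sum_pair_count[OF assms(1,2), of "\<lambda>a b. ln (P a b) - ln (T a b)"] by simp
qed

lemma renormalisation_loss: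
  fixes u g m c l :: real
  assumes u: "0 \<le> u" and m: "0 \<le> m" "m \<le> 1/2" and g: "0 \<le> l" "- l \<le> g"
    and c: "0 < c" "u * m \<le> 1 / c"
  shows "u * g \<le> u * (g + ln (1 - m)) / (1 - m) + 2 * (l + 2) / c"
proof -
  have "m * (2 * m) \<le> m * 1" using m by (intro mult_left_mono) auto
  then have "2 * m\<^sup>2 \<le> m" by (simp add: power2_eq_square)
  then have ln_ge: "- 2 * m \<le> ln (1 - m)"
    using ln_one_minus_pos_lower_bound[OF m] by linarith
  have um: "0 \<le> u * m" using u m by simp
  have "- (u * m * g) - u * ln (1 - m) \<le> u * m * l + u * (2 * m)"
    using mult_left_mono[OF g(2) um] mult_left_mono[OF ln_ge u] by simp
  also have "\<dots> = u * m * (l + 2)" by (simp add: algebra_simps)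
  also have "\<dots> \<le> (l + 2) / c" using mult_right_mono[OF c(2), of "l + 2"] g by simp
  also have "\<dots> = 2 * (l + 2) / c * (1 / 2)" using c by (simp add: field_simps)
  also have "\<dots> \<le> 2 * (l + 2) / c * (1 - m)" using m g c by (intro mult_left_mono) auto
  finally have "u * g * (1 - m) \<le> u * (g + ln (1 - m)) + 2 * (l + 2) / c * (1 - m)"
    by (simp add: algebra_simps)
  moreover have "0 < 1 - m" using m by simp
  ultimately have "u * g \<le> (u * (g + ln (1 - m)) + 2 * (l + 2) / c * (1 - m)) / (1 - m)"
    by (simp add: pos_le_divide_eq)
  also have "\<dots> = u * (g + ln (1 - m)) / (1 - m) + 2 * (l + 2) / c"
    using \<open>0 < 1 - m\<close> by (simp add: add_divide_distrib)
  finally show ?thesis .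
qed

lemma limsup_eln_div_le:
  fixes p g :: "nat \<Rightarrow> real"
  assumes bound: "eventually (\<lambda>n. p n \<le> exp (g n - real n * r)) sequentially"
    and sublinear: "(\<lambda>n. g n / real n) \<longlonglongrightarrow> 0"
  shows "limsup (\<lambda>n. eln (p n) / ereal (real n)) \<le> ereal (- r)"
proof -
  have "eventually (\<lambda>n. eln (p n) / ereal (real n) \<le> ereal (g n / real n - r)) sequentially"
    using bound eventually_gt_at_top[of 0]
  proof eventually_elim
    case (elim n)
    show ?case
    proof (cases "p n \<le> 0")
      case True
      then show ?thesis using elim by (simp add: eln_def divide_ereal_def)
    next
      case False
      then have "ln (p n) \<le> ln (exp (g n - real n * r))"
        using elim(1) by (subst ln_le_cancel_iff) auto
      then have "ln (p n) \<le> g n - real n * r" by simp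
      then have "ln (p n) / real n \<le> g n / real n - r"
        using elim(2) by (simp add: field_simps)
      then show ?thesis using False elim(2) by (simp add: eln_def)
    qed
  qed
  then have "limsup (\<lambda>n. eln (p n) / ereal (real n)) \<le> limsup (\<lambda>n. ereal (g n / real n - r))"
    by (rule Limsup_mono)
  also have "\<dots> = ereal (- r)"
  proof (intro lim_imp_Limsup)
    show "(\<lambda>n. ereal (g n / real n - r)) \<longlonglongrightarrow> ereal (- r)"
      using tendsto_diff[OF sublinear tendsto_const[of r]] by (simp add: tendsto_ereal)
  qed simp
  finally show ?thesis .
qed

section \<open>Method of types for the family K_i\<close>

locale product_chain =
  fixes d i :: nat
    and S :: "nat \<Rightarrow> 'a set"
    and pis :: "nat \<Rightarrow> 'a \<Rightarrow> real"
    and P :: "(nat \<Rightarrow> 'a) \<Rightarrow> (nat \<Rightarrow> 'a) \<Rightarrow> real"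
    and Ls :: "nat \<Rightarrow> 'a \<Rightarrow> 'a \<Rightarrow> real"
    and c l :: real
  assumes finite_S: "\<forall>j<d. finite (S j)"
    and i: "i < d"
    and pis_distr: "\<forall>j<d. is_distr (S j) (pis j)"
    and pis_pos: "\<forall>j<d. \<forall>a\<in>S j. 0 < pis j a"
    and P_trans: "is_trans (prod_space d S) P"
    and Ls_trans: "\<forall>j<d. j \<noteq> i \<longrightarrow> is_trans (S j) (Ls j)"
    and c: "0 < c" "c \<le> 1"
    and c_le: "\<And>x y. x \<in> prod_space d S \<Longrightarrow> y \<in> prod_space d S \<Longrightarrow>
      0 < prod_distr d pis x * tensor_except d i Ls x y \<Longrightarrow> c \<le> prod_distr d pis x * tensor_except d i Ls x y"
    and l: "0 \<le> l"
    and ln_P_ge: "\<And>x y. x \<in> prod_space d S \<Longrightarrow> y \<in> prod_space d S \<Longrightarrow> 0 < P x y \<Longrightarrow> - l \<le> ln (P x y)"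
begin

abbreviation "X \<equiv> prod_space d S"
abbreviation "\<pi> \<equiv> prod_distr d pis"
abbreviation "Z \<equiv> tensor_except d i Ls"
abbreviation "K \<equiv> card (X \<times> X)"
abbreviation T :: "('a \<Rightarrow> 'a \<Rightarrow> real) \<Rightarrow> (nat \<Rightarrow> 'a) \<Rightarrow> (nat \<Rightarrow> 'a) \<Rightarrow> real"
  where "T L \<equiv> tensor d (Ls(i := L))"

text \<open>Error per state pair in the exponent: (ln n) / c pays for the transitions in the deleted
  block, 2 (l + 2) / c for renormalising its row.\<close>

definition slack :: "nat \<Rightarrow> real" where
  "slack n = (2 * (l + 2) + ln (real n)) / c"

lemma finite_X: "finite X"
  using finite_S by (auto simp: prod_space_def intro!: finite_PiE)

lemma mem_X: "x \<in> X \<Longrightarrow> j < d \<Longrightarrow> x j \<in> S j"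
  by (auto simp: prod_space_def)

lemma pi_pos: "x \<in> X \<Longrightarrow> 0 < \<pi> x"
  using pis_pos mem_X by (auto simp: prod_distr_def intro!: prod_pos)

lemma pi_le_1: "x \<in> X \<Longrightarrow> \<pi> x \<le> 1"
proof -
  assume x: "x \<in> X"
  have "pis j (x j) \<le> 1" if "j < d" for j
  proof -
    have "pis j (x j) \<le> (\<Sum>a\<in>S j. pis j a)"
      using that x finite_S pis_distr by (intro member_le_sum) (auto simp: mem_X is_distr_def)
    then show ?thesis using that pis_distr by (simp add: is_distr_def)
  qed
  then show ?thesis
    using x pis_pos mem_X unfolding prod_distr_def by (intro prod_le_1) (auto intro: less_imp_le)
qed

lemma Z_nonneg: "x \<in> X \<Longrightarrow> y \<in> X \<Longrightarrow> 0 \<le> Z x y"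
  using Ls_trans mem_X unfolding tensor_except_def by (intro prod_nonneg) (auto simp: is_trans_def)

lemma Z_le_1: "x \<in> X \<Longrightarrow> y \<in> X \<Longrightarrow> Z x y \<le> 1"
  using Ls_trans mem_X finite_S unfolding tensor_except_def
  by (intro prod_le_1) (auto simp: is_trans_nonneg is_trans_le_1)

lemma T_eq: "T L x y = L (x i) (y i) * Z x y"
  by (rule tensor_fun_upd[OF i])

lemma is_trans_T: "is_trans (S i) L \<Longrightarrow> is_trans X (T L)"
  using finite_S Ls_trans by (intro is_trans_tensor) auto

lemma large_imp_ge_1: "2 / c \<le> real n \<Longrightarrow> 1 \<le> n"
proof -
  assume "2 / c \<le> real n"
  moreover have "2 \<le> 2 / c" using c by (simp add: le_divide_eq)
  ultimately show ?thesis by linarith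
qed

lemma slack_ge:
  assumes "1 \<le> n"
  shows "2 * (l + 2) / c \<le> slack n" "ln (real n) / c \<le> slack n" "l \<le> slack n"
proof -
  have "0 \<le> ln (real n)" using assms by simp
  then show "2 * (l + 2) / c \<le> slack n" "ln (real n) / c \<le> slack n"
    using c l by (simp_all add: slack_def divide_right_mono)
  have "l * c \<le> l" using c l by (intro mult_right_le_one_le) auto
  then have "l \<le> 2 * (l + 2) / c" using c l by (simp add: le_divide_eq)
  with \<open>2 * (l + 2) / c \<le> slack n\<close> show "l \<le> slack n" by linarith
qed

lemma slack_sublinear: "(\<lambda>n. k * (ln (real n + 1) + slack n) / real n) \<longlonglongrightarrow> 0"
  using c unfolding slack_def by real_asymp

lemma T_remove_entry:
  "T (remove_entry L \<alpha> \<beta>) x y =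
     (if x i = \<alpha> \<and> y i = \<beta> then 0 else T L x y / (1 - (if x i = \<alpha> then L \<alpha> \<beta> else 0)))"
  by (simp add: T_eq remove_entry_def)

text \<open>N counts the transitions of an open path and (a, b) is its closing edge, so \<open>balance\<close>
  says that the cyclic edge measure is pi (x) T M.\<close>

context
  fixes n :: nat and N :: "(nat \<Rightarrow> 'a) \<Rightarrow> (nat \<Rightarrow> 'a) \<Rightarrow> nat" and M :: "'a \<Rightarrow> 'a \<Rightarrow> real"
    and a b :: "nat \<Rightarrow> 'a"
  assumes n_large: "2 / c \<le> real n" and M: "is_trans (S i) M" and ab: "a \<in> X" "b \<in> X"
    and balance: "\<And>x y. x \<in> X \<Longrightarrow> y \<in> X \<Longrightarrow>
      real (N x y) + (if x = a \<and> y = b then 1 else 0) = real n * (\<pi> x * T M x y)"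
    and support: "\<And>x y. 0 < N x y \<Longrightarrow> 0 < P x y"
begin

lemma T_M_pos:
  assumes "x \<in> X" "y \<in> X" "0 < N x y \<or> (x = a \<and> y = b)"
  shows "0 < T M x y"
proof -
  have "0 < real (N x y) + (if x = a \<and> y = b then 1 else 0)" using assms(3) by auto
  then have "0 < real n * (\<pi> x * T M x y)" using balance[OF assms(1,2)] by simp
  moreover have "0 \<le> T M x y" using is_trans_T[OF M] assms(1,2) by (rule is_trans_nonneg)
  ultimately show ?thesis by (cases "T M x y = 0") auto
qed

lemma keep_closing_edge:
  assumes Pab: "0 < P a b"
  shows "\<exists>\<rho>. rev_kl X \<pi> P (T M) = ereal \<rho> \<and>
    (\<Sum>x\<in>X. \<Sum>y\<in>X. real (N x y) * (ln (P x y) - ln (T M x y))) \<le> K * slack n - real n * \<rho>"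
proof (rule sum_le_rev_kl[OF finite_X])
  fix x y assume xy: "x \<in> X" "y \<in> X"
  define \<delta> :: real where "\<delta> = (if x = a \<and> y = b then 1 else 0)"
  have pos: "0 < P x y \<and> 0 < T M x y" if "\<pi> x * T M x y \<noteq> 0"
  proof -
    have "real (N x y) + (if x = a \<and> y = b then 1 else 0) \<noteq> 0"
      using balance[OF xy] that large_imp_ge_1[OF n_large] by simp
    then have "0 < N x y \<or> (x = a \<and> y = b)" by (auto split: if_splits)
    then show ?thesis using T_M_pos[OF xy] support Pab by auto
  qed
  then show "\<pi> x * T M x y \<noteq> 0 \<Longrightarrow> P x y \<noteq> 0" by auto
  show "real (N x y) * (ln (P x y) - ln (T M x y)) \<le> slack n - real n * (\<pi> x * T M x y * ln (T M x y / P x y))"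
  proof (cases "\<pi> x * T M x y = 0")
    case True
    then have "N x y = 0" using balance[OF xy] by (auto split: if_splits)
    then show ?thesis using slack_ge(3)[OF large_imp_ge_1[OF n_large]] l by (simp add: True)
  next
    case False
    with pos have PT: "0 < P x y" "0 < T M x y" by auto
    have "(real (N x y) + \<delta>) * (ln (P x y) - ln (T M x y))
        = - (real n * (\<pi> x * T M x y * ln (T M x y / P x y)))"
      using balance[OF xy] PT by (simp add: \<delta>_def ln_div algebra_simps)
    moreover have "- (\<delta> * (ln (P x y) - ln (T M x y))) \<le> l"
    proof -
      have "ln (T M x y) \<le> 0"
        using PT is_trans_le_1[OF finite_X is_trans_T[OF M] xy] by simp
      then show ?thesis using ln_P_ge[OF xy PT(1)] l unfolding \<delta>_def by auto
    qed
    ultimately show ?thesis using slack_ge(3)[OF large_imp_ge_1[OF n_large]] by (simp add: algebra_simps)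
  qed
qed

text \<open>If P a b = 0 then (a, b) is never an open-path transition, so \<open>balance\<close> at (a, b) reads
  n pi(a) Z(a, b) M(a i, b i) = 1.\<close>

lemma small_closing_entry:
  assumes "P a b = 0"
  shows "real n * M (a i) (b i) \<le> 1 / c" "M (a i) (b i) \<le> 1 / 2"
proof -
  let ?m = "M (a i) (b i)"
  have m_nonneg: "0 \<le> ?m" using M mem_X[OF ab(1) i] mem_X[OF ab(2) i] by (rule is_trans_nonneg)
  have "N a b = 0" using support[of a b] assms by (cases "N a b") auto
  then have one: "real n * ?m * (\<pi> a * Z a b) = 1"
    using balance[OF ab] by (simp add: T_eq algebra_simps)
  then have "\<pi> a * Z a b \<noteq> 0" by auto
  moreover have "0 \<le> \<pi> a * Z a b" using pi_pos[OF ab(1)] Z_nonneg[OF ab] by simp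
  ultimately have "0 < \<pi> a * Z a b" by (simp add: order_less_le)
  then have "c \<le> \<pi> a * Z a b" using c_le[OF ab] by (simp add: T_eq)
  then have "real n * ?m * c \<le> 1"
    using one m_nonneg mult_left_mono[of c "\<pi> a * Z a b" "real n * ?m"] by simp
  then show nm: "real n * ?m \<le> 1 / c" using c by (simp add: le_divide_eq)
  have "?m * (2 / c) \<le> ?m * real n" using n_large m_nonneg by (rule mult_left_mono)
  then have "?m * 2 \<le> 1" using nm c by (simp add: field_simps)
  then show "?m \<le> 1 / 2" by simp
qed

lemma removed_block_term:
  assumes Pab: "P a b = 0" and xy: "x \<in> X" "y \<in> X" and block: "x i = a i" "y i = b i"
  shows "real (N x y) * (ln (P x y) - ln (T M x y)) \<le> slack n"
proof (cases "N x y = 0")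
  case True
  then show ?thesis using slack_ge(3)[OF large_imp_ge_1[OF n_large]] l by simp
next
  case False
  then have N_ge_1: "1 \<le> real (N x y)" by simp
  have PT: "0 < P x y" "0 < T M x y" using False support T_M_pos[OF xy] by auto
  have piZ: "\<pi> x * Z x y \<le> 1"
    using pi_pos[OF xy(1)] pi_le_1[OF xy(1)] Z_nonneg[OF xy] Z_le_1[OF xy] by (intro mult_le_one) auto
  have balance': "real (N x y) + (if x = a \<and> y = b then 1 else 0) = real n * M (a i) (b i) * (\<pi> x * Z x y)"
    using balance[OF xy] block by (simp add: T_eq algebra_simps)
  have "real (N x y) \<le> real n * M (a i) (b i) * (\<pi> x * Z x y)"
    using balance' by (cases "x = a \<and> y = b") auto
  also have "\<dots> \<le> real n * M (a i) (b i)"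
    using piZ mult_left_le[OF piZ] M mem_X[OF ab(1) i] mem_X[OF ab(2) i] by (simp add: is_trans_nonneg)
  also have "\<dots> \<le> 1 / c" by (rule small_closing_entry(1)[OF Pab])
  finally have N_le: "real (N x y) \<le> 1 / c" .
  have "1 \<le> real n * (\<pi> x * T M x y)"
    using balance[OF xy] N_ge_1 by (cases "x = a \<and> y = b") auto
  also have "\<dots> \<le> real n * T M x y"
    using pi_pos[OF xy(1)] pi_le_1[OF xy(1)] PT(2) by (intro mult_left_mono mult_left_le_one_le) auto
  finally have "ln 1 \<le> ln (real n * T M x y)" using PT(2) by simp
  then have "- ln (T M x y) \<le> ln (real n)" using PT(2) large_imp_ge_1[OF n_large] by (simp add: ln_mult)
  moreover have "ln (P x y) \<le> 0"
    using PT(1) is_trans_le_1[OF finite_X P_trans xy] by simp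
  ultimately have "ln (P x y) - ln (T M x y) \<le> ln (real n)" by linarith
  then have "real (N x y) * (ln (P x y) - ln (T M x y)) \<le> real (N x y) * ln (real n)"
    by (rule mult_left_mono) simp
  also have "\<dots> \<le> 1 / c * ln (real n)" using N_le large_imp_ge_1[OF n_large] by (intro mult_right_mono) auto
  also have "\<dots> \<le> slack n" using slack_ge(2)[OF large_imp_ge_1[OF n_large]] by simp
  finally show ?thesis .
qed

lemma count_off_closing_edge:
  assumes "x \<in> X" "y \<in> X" "\<not> (x = a \<and> y = b)"
  shows "real (N x y) = real n * (\<pi> x * T M x y)"
  using balance[OF assms(1,2)] assms(3) by simp

lemma rescaled_row_entry:
  assumes Pab: "P a b = 0" and xy: "x \<in> X" "y \<in> X" and off_block: "\<not> (x i = a i \<and> y i = b i)"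
  obtains m where "0 \<le> m" "m \<le> 1 / 2" "real (N x y) * m \<le> 1 / c"
    "T (remove_entry M (a i) (b i)) x y = T M x y / (1 - m)"
proof -
  define m where "m = (if x i = a i then M (a i) (b i) else 0)"
  have m: "0 \<le> m" "m \<le> 1 / 2" "real n * m \<le> 1 / c"
    using small_closing_entry[OF Pab] c M mem_X[OF ab(1) i] mem_X[OF ab(2) i]
    by (auto simp: m_def is_trans_nonneg)
  have "\<pi> x * T M x y \<le> 1"
    using pi_pos[OF xy(1)] pi_le_1[OF xy(1)] is_trans_nonneg[OF is_trans_T[OF M] xy]
      is_trans_le_1[OF finite_X is_trans_T[OF M] xy]
    by (intro mult_le_one) auto
  moreover have "real (N x y) = real n * (\<pi> x * T M x y)"
    using count_off_closing_edge[OF xy] off_block by auto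
  ultimately have "real (N x y) \<le> real n" by (simp add: mult_left_le)
  then have "real (N x y) * m \<le> real n * m" using m(1) by (rule mult_right_mono)
  moreover have "T (remove_entry M (a i) (b i)) x y = T M x y / (1 - m)"
    using off_block by (auto simp: T_remove_entry m_def)
  ultimately show ?thesis using that m by simp
qed

lemma rescaled_term:
  assumes Pab: "P a b = 0" and xy: "x \<in> X" "y \<in> X" and off_block: "\<not> (x i = a i \<and> y i = b i)"
  defines "L \<equiv> remove_entry M (a i) (b i)"
  shows "\<pi> x * T L x y \<noteq> 0 \<longrightarrow> P x y \<noteq> 0"
    and "real (N x y) * (ln (P x y) - ln (T M x y)) \<le> slack n - real n * (\<pi> x * T L x y * ln (T L x y / P x y))"
proof -
  obtain m where m: "0 \<le> m" "m \<le> 1 / 2" "real (N x y) * m \<le> 1 / c" and TL: "T L x y = T M x y / (1 - m)"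
    unfolding L_def by (rule rescaled_row_entry[OF Pab xy off_block])
  have N_eq: "real (N x y) = real n * (\<pi> x * T M x y)"
    using count_off_closing_edge[OF xy] off_block by auto
  have T_nonneg: "0 \<le> T M x y" using is_trans_T[OF M] xy by (rule is_trans_nonneg)
  have pos: "0 < P x y" if "T M x y \<noteq> 0"
  proof -
    have "0 < T M x y" using T_nonneg that by simp
    then have "0 < real (N x y)" using N_eq pi_pos[OF xy(1)] large_imp_ge_1[OF n_large] by simp
    then show ?thesis using support[of x y] by simp
  qed
  show "\<pi> x * T L x y \<noteq> 0 \<longrightarrow> P x y \<noteq> 0" using pos TL by auto
  show "real (N x y) * (ln (P x y) - ln (T M x y)) \<le> slack n - real n * (\<pi> x * T L x y * ln (T L x y / P x y))"
  proof (cases "T M x y = 0")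
    case True
    then show ?thesis using N_eq TL slack_ge(3)[OF large_imp_ge_1[OF n_large]] l by simp
  next
    case False
    then have PT: "0 < P x y" "0 < T M x y" using pos T_nonneg by auto
    have "ln (T M x y) \<le> 0"
      using PT(2) is_trans_le_1[OF finite_X is_trans_T[OF M] xy] by simp
    then have "- l \<le> ln (P x y) - ln (T M x y)" using ln_P_ge[OF xy PT(1)] by linarith
    then have "real (N x y) * (ln (P x y) - ln (T M x y))
        \<le> real (N x y) * (ln (P x y) - ln (T M x y) + ln (1 - m)) / (1 - m) + 2 * (l + 2) / c"
      using m c l by (intro renormalisation_loss) auto
    also have "real (N x y) * (ln (P x y) - ln (T M x y) + ln (1 - m)) / (1 - m)
        = - (real n * (\<pi> x * T L x y * ln (T L x y / P x y)))"
    proof -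
      have ln_ratio: "ln (T L x y / P x y) = - (ln (P x y) - ln (T M x y) + ln (1 - m))"
        using PT m by (simp add: TL ln_div ln_mult)
      show ?thesis unfolding ln_ratio using m by (simp add: TL N_eq field_simps)
    qed
    finally show ?thesis using slack_ge(1)[OF large_imp_ge_1[OF n_large]] by linarith
  qed
qed

lemma remove_closing_edge:
  assumes Pab: "P a b = 0"
  shows "\<exists>\<rho>. rev_kl X \<pi> P (T (remove_entry M (a i) (b i))) = ereal \<rho> \<and>
    (\<Sum>x\<in>X. \<Sum>y\<in>X. real (N x y) * (ln (P x y) - ln (T M x y))) \<le> K * slack n - real n * \<rho>"
proof (rule sum_le_rev_kl[OF finite_X])
  fix x y assume xy: "x \<in> X" "y \<in> X"
  let ?L = "remove_entry M (a i) (b i)"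
  show "\<pi> x * T ?L x y \<noteq> 0 \<Longrightarrow> P x y \<noteq> 0"
    using rescaled_term(1)[OF Pab xy] by (cases "x i = a i \<and> y i = b i") (auto simp: T_remove_entry)
  show "real (N x y) * (ln (P x y) - ln (T M x y)) \<le> slack n - real n * (\<pi> x * T ?L x y * ln (T ?L x y / P x y))"
  proof (cases "x i = a i \<and> y i = b i")
    case True
    then show ?thesis using removed_block_term[OF Pab xy] by (simp add: T_remove_entry)
  next
    case False
    then show ?thesis by (rule rescaled_term(2)[OF Pab xy])
  qed
qed

lemma closing_edge_divergence_bound:
  "\<exists>L \<rho>. is_trans (S i) L \<and> rev_kl X \<pi> P (T L) = ereal \<rho> \<and>
    (\<Sum>x\<in>X. \<Sum>y\<in>X. real (N x y) * (ln (P x y) - ln (T M x y))) \<le> K * slack n - real n * \<rho>"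
proof (cases "0 < P a b")
  case True
  then show ?thesis using keep_closing_edge M by blast
next
  case False
  then have Pab: "P a b = 0" using is_trans_nonneg[OF P_trans ab] by simp
  have "is_trans (S i) (remove_entry M (a i) (b i))"
    using finite_S i M mem_X[OF ab(1) i] mem_X[OF ab(2) i] small_closing_entry(2)[OF Pab]
    by (intro is_trans_remove_entry) auto
  then show ?thesis using remove_closing_edge[OF Pab] by blast
qed

end

lemma path_exponent_le:
  assumes n: "2 / c \<le> real n" and xs: "xs \<in> PiE {1..n} (\<lambda>_. X)" and M: "is_trans (S i) M"
    and edge: "\<forall>x\<in>X. \<forall>y\<in>X. emp_edge n xs x y = \<pi> x * T M x y"
    and r: "\<forall>L. is_trans (S i) L \<longrightarrow> ereal r \<le> rev_kl X \<pi> P (T L)"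
    and P_pos: "\<forall>k\<in>{1..<n}. 0 < P (xs k) (xs (Suc k))"
  shows "\<forall>k\<in>{1..<n}. 0 < T M (xs k) (xs (Suc k))"
    and "(\<Sum>x\<in>X. \<Sum>y\<in>X. real (pair_count n xs x y) * (ln (P x y) - ln (T M x y)))
           \<le> K * slack n - real n * r"
proof -
  define N where "N = pair_count n xs"
  have n1: "1 \<le> n" by (rule large_imp_ge_1[OF n])
  have ends: "xs n \<in> X" "xs 1 \<in> X" using xs n1 by auto
  have balance: "real (N x y) + (if x = xs n \<and> y = xs 1 then 1 else 0) = real n * (\<pi> x * T M x y)"
    if "x \<in> X" "y \<in> X" for x y
  proof -
    have "real (N x y) + (if x = xs n \<and> y = xs 1 then 1 else 0) = real n * emp_edge n xs x y"
      using n1 by (auto simp: N_def emp_edge_eq_pair_count)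
    then show ?thesis using edge that by simp
  qed
  have support: "0 < P x y" if "0 < N x y" for x y
    using that P_pos by (auto simp: N_def pair_count_pos_iff)
  show "\<forall>k\<in>{1..<n}. 0 < T M (xs k) (xs (Suc k))"
  proof
    fix k assume k: "k \<in> {1..<n}"
    show "0 < T M (xs k) (xs (Suc k))"
    proof (rule T_M_pos[OF n M ends balance support])
      show "xs k \<in> X" "xs (Suc k) \<in> X" using k xs by auto
      show "0 < N (xs k) (xs (Suc k)) \<or> (xs k = xs n \<and> xs (Suc k) = xs 1)"
        using k by (auto simp: N_def pair_count_pos_iff)
    qed
  qed
  obtain L \<rho> where "is_trans (S i) L" "rev_kl X \<pi> P (T L) = ereal \<rho>"
    and bound: "(\<Sum>x\<in>X. \<Sum>y\<in>X. real (N x y) * (ln (P x y) - ln (T M x y))) \<le> K * slack n - real n * \<rho>"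
    using closing_edge_divergence_bound[OF n M ends balance support] by blast
  then have "r \<le> \<rho>" using r by auto
  then show "(\<Sum>x\<in>X. \<Sum>y\<in>X. real (pair_count n xs x y) * (ln (P x y) - ln (T M x y)))
      \<le> K * slack n - real n * r"
    using bound mult_left_mono[of r \<rho> "real n"] by (simp add: N_def)
qed

lemma path_prob_le:
  assumes n: "2 / c \<le> real n" and xs: "xs \<in> PiE {1..n} (\<lambda>_. X)" and M: "is_trans (S i) M"
    and edge: "\<forall>x\<in>X. \<forall>y\<in>X. emp_edge n xs x y = \<pi> x * T M x y"
    and r: "\<forall>L. is_trans (S i) L \<longrightarrow> ereal r \<le> rev_kl X \<pi> P (T L)"
  shows "(\<Prod>k\<in>{1..<n}. P (xs k) (xs (Suc k)))
       \<le> exp (K * slack n - real n * r) * (\<Prod>k\<in>{1..<n}. T M (xs k) (xs (Suc k)))"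
proof -
  have T_nonneg: "0 \<le> (\<Prod>k\<in>{1..<n}. T M (xs k) (xs (Suc k)))"
    using xs is_trans_nonneg[OF is_trans_T[OF M]] by (intro prod_nonneg) (simp add: PiE_iff)
  show ?thesis
  proof (cases "\<forall>k\<in>{1..<n}. 0 < P (xs k) (xs (Suc k))")
    case True
    note T_pos = path_exponent_le(1)[OF n xs M edge r True]
    have "(\<Prod>k\<in>{1..<n}. P (xs k) (xs (Suc k)))
        = exp (\<Sum>x\<in>X. \<Sum>y\<in>X. real (pair_count n xs x y) * (ln (P x y) - ln (T M x y)))
          * (\<Prod>k\<in>{1..<n}. T M (xs k) (xs (Suc k)))"
      using xs True T_pos by (intro prod_steps_eq_exp_sum_pair_count[OF finite_X]) auto
    also have "\<dots> \<le> exp (K * slack n - real n * r) * (\<Prod>k\<in>{1..<n}. T M (xs k) (xs (Suc k)))"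
      using path_exponent_le(2)[OF n xs M edge r True] T_nonneg by (intro mult_right_mono) simp_all
    finally show ?thesis .
  next
    case False
    then obtain k where k: "k \<in> {1..<n}" "P (xs k) (xs (Suc k)) \<le> 0" by auto
    then have "xs k \<in> X" "xs (Suc k) \<in> X" using xs by auto
    then have "P (xs k) (xs (Suc k)) = 0" using k(2) is_trans_nonneg[OF P_trans] by (meson antisym)
    then have "(\<Prod>k\<in>{1..<n}. P (xs k) (xs (Suc k))) = 0"
      using k(1) by (intro prod_zero) auto
    then show ?thesis using T_nonneg by (metis mult_nonneg_nonneg exp_ge_zero)
  qed
qed

definition paths_in_K :: "nat \<Rightarrow> (nat \<Rightarrow> nat \<Rightarrow> 'a) set" where
  "paths_in_K n = {xs \<in> PiE {1..n} (\<lambda>_. X). in_K d S pis Ls i (emp_edge n xs)}"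

definition edge_type :: "nat \<Rightarrow> (nat \<Rightarrow> nat \<Rightarrow> 'a) \<Rightarrow> (nat \<Rightarrow> 'a) \<times> (nat \<Rightarrow> 'a) \<Rightarrow> real" where
  "edge_type n xs = restrict (\<lambda>(x, y). emp_edge n xs x y) (X \<times> X)"

definition type_kernel :: "((nat \<Rightarrow> 'a) \<times> (nat \<Rightarrow> 'a) \<Rightarrow> real) \<Rightarrow> (nat \<Rightarrow> 'a) \<Rightarrow> (nat \<Rightarrow> 'a) \<Rightarrow> real"
  where "type_kernel \<nu> x y = \<nu> (x, y) / \<pi> x"

lemma paths_in_K_E:
  assumes "xs \<in> paths_in_K n"
  obtains M where "is_trans (S i) M" "\<forall>x\<in>X. \<forall>y\<in>X. emp_edge n xs x y = \<pi> x * T M x y"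
    "\<forall>x\<in>X. \<forall>y\<in>X. type_kernel (edge_type n xs) x y = T M x y"
proof -
  obtain M where "is_trans (S i) M" "\<forall>x\<in>X. \<forall>y\<in>X. emp_edge n xs x y = \<pi> x * T M x y"
    using assms by (auto simp: paths_in_K_def in_K_def)
  with that show ?thesis using pi_pos by (force simp: type_kernel_def edge_type_def)
qed

lemma edge_type_in_grid:
  "1 \<le> n \<Longrightarrow> edge_type n xs \<in> PiE (X \<times> X) (\<lambda>_. (\<lambda>k. real k / real n) ` {0..n})"
  unfolding edge_type_def restrict_PiE_iff using emp_edge_in_grid by auto

lemma same_type_paths_le_1:
  assumes \<mu>: "is_distr X \<mu>" and n1: "1 \<le> n"
  shows "(\<Sum>xs\<in>{xs\<in>paths_in_K n. edge_type n xs = \<nu>}.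
           \<mu> (xs 1) * (\<Prod>k\<in>{1..<n}. type_kernel \<nu> (xs k) (xs (Suc k)))) \<le> 1"
proof (cases "{xs\<in>paths_in_K n. edge_type n xs = \<nu>} = {}")
  case False
  then obtain xs0 where "xs0 \<in> paths_in_K n" "edge_type n xs0 = \<nu>" by auto
  then obtain M where "is_trans (S i) M" "\<forall>x\<in>X. \<forall>y\<in>X. type_kernel \<nu> x y = T M x y"
    by (auto elim: paths_in_K_E)
  then have "is_trans X (type_kernel \<nu>)" by (auto intro: is_trans_cong[OF is_trans_T])
  then show ?thesis
    using \<mu> n1 by (intro sum_paths_prod_trans_le_1[OF finite_X]) (auto simp: paths_in_K_def)
next
  case True
  then show ?thesis by (simp only: True) simp
qed

lemma event_prob_le:
  assumes n: "2 / c \<le> real n" and \<mu>: "is_distr X \<mu>"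
    and r: "\<forall>L. is_trans (S i) L \<longrightarrow> ereal r \<le> rev_kl X \<pi> P (T L)"
  shows "mc_prob X \<mu> P n (\<lambda>xs. in_K d S pis Ls i (emp_edge n xs))
       \<le> exp (K * (ln (real n + 1) + slack n) - real n * r)"
proof -
  define Types where "Types = PiE (X \<times> X) (\<lambda>_. (\<lambda>k. real k / real n) ` {0..n})"
  define w where "w \<nu> xs = \<mu> (xs 1) * (\<Prod>k\<in>{1..<n}. type_kernel \<nu> (xs k) (xs (Suc k)))" for \<nu> xs
  define B where "B = exp (K * slack n - real n * r)"
  have n1: "1 \<le> n" by (rule large_imp_ge_1[OF n])
  have path: "\<mu> (xs 1) * (\<Prod>k\<in>{1..<n}. P (xs k) (xs (Suc k))) \<le> B * w (edge_type n xs) xs"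
    if xs: "xs \<in> paths_in_K n" for xs
  proof -
    obtain M where M: "is_trans (S i) M" and edge: "\<forall>x\<in>X. \<forall>y\<in>X. emp_edge n xs x y = \<pi> x * T M x y"
      and kernel: "\<forall>x\<in>X. \<forall>y\<in>X. type_kernel (edge_type n xs) x y = T M x y"
      using xs by (rule paths_in_K_E)
    have xs': "xs \<in> PiE {1..n} (\<lambda>_. X)" using xs by (simp add: paths_in_K_def)
    have "(\<Prod>k\<in>{1..<n}. T M (xs k) (xs (Suc k)))
        = (\<Prod>k\<in>{1..<n}. type_kernel (edge_type n xs) (xs k) (xs (Suc k)))"
      using xs' kernel by (intro prod.cong) (auto simp: PiE_iff)
    moreover have "0 \<le> \<mu> (xs 1)" using \<mu> xs' n1 by (auto simp: is_distr_def)
    ultimately show ?thesis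
      using mult_left_mono[OF path_prob_le[OF n xs' M edge r]] by (simp add: w_def B_def mult_ac)
  qed
  have "mc_prob X \<mu> P n (\<lambda>xs. in_K d S pis Ls i (emp_edge n xs))
      = (\<Sum>xs\<in>paths_in_K n. \<mu> (xs 1) * (\<Prod>k\<in>{1..<n}. P (xs k) (xs (Suc k))))"
    by (simp add: mc_prob_def paths_in_K_def)
  also have "\<dots> \<le> B * (\<Sum>xs\<in>paths_in_K n. w (edge_type n xs) xs)"
    unfolding sum_distrib_left using path by (rule sum_mono)
  also have "(\<Sum>xs\<in>paths_in_K n. w (edge_type n xs) xs)
      = (\<Sum>\<nu>\<in>Types. \<Sum>xs\<in>{xs\<in>paths_in_K n. edge_type n xs = \<nu>}. w \<nu> xs)"
  proof -
    have "(\<Sum>xs\<in>paths_in_K n. w (edge_type n xs) xs)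
        = (\<Sum>\<nu>\<in>Types. \<Sum>xs\<in>{xs\<in>paths_in_K n. edge_type n xs = \<nu>}. w (edge_type n xs) xs)"
      using finite_X edge_type_in_grid[OF n1]
      by (intro sum.group[symmetric]) (auto simp: paths_in_K_def Types_def intro!: finite_PiE)
    then show ?thesis by (auto intro!: sum.cong)
  qed
  also have "\<dots> \<le> (\<Sum>\<nu>\<in>Types. 1)"
    unfolding w_def by (intro sum_mono same_type_paths_le_1[OF \<mu> n1])
  also have "\<dots> = real (card Types)" by simp
  also have "\<dots> \<le> real ((n + 1) ^ K)"
    unfolding Types_def of_nat_le_iff using finite_X by (intro card_PiE_grid_le) simp
  finally have "mc_prob X \<mu> P n (\<lambda>xs. in_K d S pis Ls i (emp_edge n xs)) \<le> B * real ((n + 1) ^ K)"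
    by (simp add: B_def mult_left_mono)
  also have "real ((n + 1) ^ K) = exp (K * ln (real n + 1))" by (simp add: exp_of_nat_mult add.commute)
  finally show ?thesis by (simp add: B_def mult_exp_exp algebra_simps)
qed

lemma limsup_event_prob_le:
  assumes \<mu>: "is_distr X \<mu>" and R: "\<forall>L. is_trans (S i) L \<longrightarrow> R \<le> rev_kl X \<pi> P (T L)"
  shows "limsup (\<lambda>n. eln (mc_prob X \<mu> P n (\<lambda>xs. in_K d S pis Ls i (emp_edge n xs))) / ereal (real n)) \<le> - R"
proof (rule ereal_le_real)
  fix z assume "- R \<le> ereal z"
  then have "ereal (- z) \<le> R" by (metis ereal_uminus_le_reorder uminus_ereal.simps(1))
  then have r: "\<forall>L. is_trans (S i) L \<longrightarrow> ereal (- z) \<le> rev_kl X \<pi> P (T L)"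
    using R order.trans by blast
  have "\<forall>\<^sub>F n in sequentially. 2 / c \<le> real n"
    using filterlim_real_sequentially by (simp add: filterlim_at_top)
  then have "\<forall>\<^sub>F n in sequentially. mc_prob X \<mu> P n (\<lambda>xs. in_K d S pis Ls i (emp_edge n xs))
      \<le> exp (K * (ln (real n + 1) + slack n) - real n * - z)"
    by eventually_elim (rule event_prob_le[OF _ \<mu> r])
  from limsup_eln_div_le[OF this slack_sublinear]
  show "limsup (\<lambda>n. eln (mc_prob X \<mu> P n (\<lambda>xs. in_K d S pis Ls i (emp_edge n xs))) / ereal (real n))
      \<le> ereal z" by simp
qed

end

lemma product_chain_exists:
  assumes fin: "\<forall>j<d. finite (S j)" and i: "i < d"
    and pis_distr: "\<forall>j<d. is_distr (S j) (pis j)" and pis_pos: "\<forall>j<d. \<forall>a\<in>S j. 0 < pis j a"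
    and P_trans: "is_trans (prod_space d S) P" and Ls_trans: "\<forall>j<d. j \<noteq> i \<longrightarrow> is_trans (S j) (Ls j)"
  shows "\<exists>c l. product_chain d i S pis P Ls c l"
proof -
  let ?X = "prod_space d S"
  have finite_XX: "finite (?X \<times> ?X)" using fin by (auto simp: prod_space_def intro!: finite_PiE)
  obtain c where c: "0 < c" "c \<le> 1"
    and c_le: "\<And>z. z \<in> ?X \<times> ?X \<Longrightarrow> 0 < (\<lambda>(x, y). prod_distr d pis x * tensor_except d i Ls x y) z
                \<Longrightarrow> c \<le> (\<lambda>(x, y). prod_distr d pis x * tensor_except d i Ls x y) z"
    by (rule finite_positive_lower_bound[OF finite_XX,
          of "\<lambda>(x, y). prod_distr d pis x * tensor_except d i Ls x y"]) blast
  obtain p where p: "0 < p" "p \<le> 1"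
    and p_le: "\<And>z. z \<in> ?X \<times> ?X \<Longrightarrow> 0 < case_prod P z \<Longrightarrow> p \<le> case_prod P z"
    by (rule finite_positive_lower_bound[OF finite_XX, of "case_prod P"]) blast
  have c_le': "c \<le> prod_distr d pis x * tensor_except d i Ls x y"
    if "x \<in> ?X" "y \<in> ?X" "0 < prod_distr d pis x * tensor_except d i Ls x y" for x y
    using c_le[of "(x, y)"] that by simp
  have ln_P_ge: "- (- ln p) \<le> ln (P x y)" if "x \<in> ?X" "y \<in> ?X" "0 < P x y" for x y
    using p p_le[of "(x, y)"] that by simp
  have "0 \<le> - ln p" using p by simp
  from product_chain.intro[OF fin i pis_distr pis_pos P_trans Ls_trans c c_le' this ln_P_ge]
  show ?thesis by blast
qed

theorem theorem2p12:
  fixes d i :: nat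
    and S :: "nat \<Rightarrow> 'a set"
    and pis :: "nat \<Rightarrow> 'a \<Rightarrow> real"
    and P :: "(nat \<Rightarrow> 'a) \<Rightarrow> (nat \<Rightarrow> 'a) \<Rightarrow> real"
    and Ls :: "nat \<Rightarrow> 'a \<Rightarrow> 'a \<Rightarrow> real"
    and Lstar :: "'a \<Rightarrow> 'a \<Rightarrow> real"
    and mu :: "(nat \<Rightarrow> 'a) \<Rightarrow> real"
  assumes fin: "\<forall>l<d. finite (S l) \<and> S l \<noteq> {}"
    and i: "i < d"
    and pis_distr: "\<forall>l<d. is_distr (S l) (pis l)"
    and pis_pos: "\<forall>l<d. \<forall>a\<in>S l. 0 < pis l a"
    and P_trans: "is_trans (prod_space d S) P"
    and P_stat: "is_stationary (prod_space d S) (prod_distr d pis) P"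
    and Ls_trans: "\<forall>j<d. j \<noteq> i \<longrightarrow> is_trans (S j) (Ls j)"
    and Ls_stat: "\<forall>j<d. j \<noteq> i \<longrightarrow> is_stationary (S j) (pis j) (Ls j)"
    and Lstar_trans: "is_trans (S i) Lstar"
    and Lstar_min: "\<forall>L. is_trans (S i) L \<longrightarrow>
          rev_kl (prod_space d S) (prod_distr d pis) P (tensor d (Ls(i := Lstar)))
            \<le> rev_kl (prod_space d S) (prod_distr d pis) P (tensor d (Ls(i := L)))"
    and mu_distr: "is_distr (prod_space d S) mu"
  shows "limsup (\<lambda>n. eln (mc_prob (prod_space d S) mu P n
                     (\<lambda>xs. in_K d S pis Ls i (emp_edge n xs))) / ereal (real n))
         \<le> - rev_kl (prod_space d S) (prod_distr d pis) P (tensor d (Ls(i := Lstar)))"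
proof -
  have "\<forall>j<d. finite (S j)" using fin by simp
  then obtain c l where "product_chain d i S pis P Ls c l"
    using product_chain_exists[OF _ i pis_distr pis_pos P_trans Ls_trans] by blast
  then interpret product_chain d i S pis P Ls c l .
  show ?thesis by (rule limsup_event_prob_le[OF mu_distr Lstar_min])
qed

end
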